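(* Let $\sigma\in\mathcal E$ be a coordinated equilibrium strategy of $\langle\Gamma,M\rangle$. Then $\pi(\sigma,\sigma)\le\max\{\pi(\sigma_L,\sigma_L),\pi(\sigma_R,\sigma_R)\}$.
   Context: Game $\langle\Gamma,M\rangle$. Two players; each player's type is drawn independently from a distribution on $U=[0,1]$ with continuous CDF $F$ and density $f$ with $f(u)>0$ for all $u\in[0,1]$. Each player chooses an action in $\{L,R\}$; a player of type $u$ gets $1-u$ if both choose $L$, $u$ if both choose $R$, and $0$ otherwise. Before choosing actions, players simultaneously send publicly observed costless messages from a finite set $M$ with $|M|\ge4$. A strategy is $\sigma=(\mu,\xi)$ with $\mu:U\to\Delta(M)$ measurable ($\mu_u(m)$ = probability type $u$ sends $m$) and $\xi:M\times M\to[0,1]$: a player who sent $m$ and observes $m'$ plays $L$ iff her type $u\le\xi(m,m')$. $\Sigma$ is the set of strategies. $\bar\mu(m)=\int_0^1\mu_u(m)f(u)du$, $\mathrm{supp}(\bar\mu)=\{m:\bar\mu(m)>0\}$. Write $\xi(m,m')=L$ if $\xi(m,m')\ge\sup\{u:\mu_u(m)>0\}$ and $\xi(m,m')=R$ if $\xi(m,m')\le\inf\{u:\mu_u(m)>0\}$. Payoffs: $\pi_{u,v}(\sigma,\sigma')=\sum_{m,m'}\mu_u(m)\mu'_v(m')[(1-u)\mathbf 1\{u\le\xi(m,m')\}\mathbf 1\{v\le\xi'(m',m)\}+u\mathbf 1\{u>\xi(m,m')\}\mathbf 1\{v>\xi'(m',m)\}]$, $\pi_u(\sigma,\sigma')=\int_0^1\pi_{u,v}(\sigma,\sigma')f(v)dv$,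 $\pi(\sigma,\sigma')=\int_0^1\pi_u(\sigma,\sigma')f(u)du$. $\sigma\in\mathcal E$ (equilibrium strategy) if $\pi_u(\sigma,\sigma)\ge\pi_u(\sigma',\sigma)$ for all $u$, $\sigma'$. $\sigma$ is coordinated if for all $m,m'\in\mathrm{supp}(\bar\mu)$, either $\xi(m,m')=\xi(m',m)=L$ or $\xi(m,m')=\xi(m',m)=R$. Fix distinct $m_L,m_R\in M$. $\mu^*(u)=m_L$ (with probability one) if $u\le1/2$ and $\mu^*(u)=m_R$ if $u>1/2$. $\xi_L(m,m')=0$ if $m=m'=m_R$ and $1$ otherwise; $\xi_R(m,m')=1$ if $m=m'=m_L$ and $0$ otherwise. $\sigma_L=(\mu^*,\xi_L)$, $\sigma_R=(\mu^*,\xi_R)$. *)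

theory Defs
  imports "HOL-Analysis.Analysis"
begin

text \<open>A strategy sigma = (mu, xi): mu u m is the probability that type u sends message m,
  xi m m' is the cutoff (a player who sent m and observes m' plays L iff u \<le> xi m m').\<close>
type_synonym 'm strat = "(real \<Rightarrow> 'm \<Rightarrow> real) \<times> ('m \<Rightarrow> 'm \<Rightarrow> real)"

definition Sigma_set :: "'m::finite strat set" where
  "Sigma_set = {(\<mu>, \<xi>).
      (\<forall>m. (\<lambda>u. \<mu> u m) \<in> borel_measurable lborel) \<and>
      (\<forall>u\<in>{0..1}. (\<forall>m. \<mu> u m \<ge> 0) \<and> (\<Sum>m\<in>UNIV. \<mu> u m) = 1) \<and>
      (\<forall>m m'. \<xi> m m' \<in> {0..1})}"

definition pi_uv :: "'m::finite strat \<Rightarrow> 'm strat \<Rightarrow> real \<Rightarrow> real \<Rightarrow> real" where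
  "pi_uv \<sigma> \<sigma>' u v =
     (\<Sum>m\<in>UNIV. \<Sum>m'\<in>UNIV. fst \<sigma> u m * fst \<sigma>' v m' *
        ((1 - u) * (if u \<le> snd \<sigma> m m' then 1 else 0) * (if v \<le> snd \<sigma>' m' m then 1 else 0)
         + u * (if u > snd \<sigma> m m' then 1 else 0) * (if v > snd \<sigma>' m' m then 1 else 0)))"

definition pi_u :: "(real \<Rightarrow> real) \<Rightarrow> 'm::finite strat \<Rightarrow> 'm strat \<Rightarrow> real \<Rightarrow> real" where
  "pi_u f \<sigma> \<sigma>' u = (LINT v:{0..1}|lborel. pi_uv \<sigma> \<sigma>' u v * f v)"

definition pi_tot :: "(real \<Rightarrow> real) \<Rightarrow> 'm::finite strat \<Rightarrow> 'm strat \<Rightarrow> real" where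
  "pi_tot f \<sigma> \<sigma>' = (LINT u:{0..1}|lborel. pi_u f \<sigma> \<sigma>' u * f u)"

definition equilibrium :: "(real \<Rightarrow> real) \<Rightarrow> 'm::finite strat \<Rightarrow> bool" where
  "equilibrium f \<sigma> \<longleftrightarrow> \<sigma> \<in> Sigma_set \<and>
     (\<forall>u\<in>{0..1}. \<forall>\<sigma>'\<in>Sigma_set. pi_u f \<sigma> \<sigma> u \<ge> pi_u f \<sigma>' \<sigma> u)"

definition mu_bar :: "(real \<Rightarrow> real) \<Rightarrow> (real \<Rightarrow> 'm \<Rightarrow> real) \<Rightarrow> 'm \<Rightarrow> real" where
  "mu_bar f \<mu> m = (LINT u:{0..1}|lborel. \<mu> u m * f u)"

text \<open>xi(m,m') = L and xi(m,m') = R, relative to the types in [0,1] that send m.\<close>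
definition is_L :: "'m strat \<Rightarrow> 'm \<Rightarrow> 'm \<Rightarrow> bool" where
  "is_L \<sigma> m m' \<longleftrightarrow> snd \<sigma> m m' \<ge> Sup {u\<in>{0..1}. fst \<sigma> u m > 0}"

definition is_R :: "'m strat \<Rightarrow> 'm \<Rightarrow> 'm \<Rightarrow> bool" where
  "is_R \<sigma> m m' \<longleftrightarrow> snd \<sigma> m m' \<le> Inf {u\<in>{0..1}. fst \<sigma> u m > 0}"

definition coordinated :: "(real \<Rightarrow> real) \<Rightarrow> 'm::finite strat \<Rightarrow> bool" where
  "coordinated f \<sigma> \<longleftrightarrow> (\<forall>m m'. mu_bar f (fst \<sigma>) m > 0 \<longrightarrow> mu_bar f (fst \<sigma>) m' > 0 \<longrightarrow>
      (is_L \<sigma> m m' \<and> is_L \<sigma> m' m) \<or> (is_R \<sigma> m m' \<and> is_R \<sigma> m' m))"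

definition mu_star :: "'m \<Rightarrow> 'm \<Rightarrow> real \<Rightarrow> 'm \<Rightarrow> real" where
  "mu_star mL mR u m = (if u \<le> 1/2 then (if m = mL then 1 else 0) else (if m = mR then 1 else 0))"

definition xi_L :: "'m \<Rightarrow> 'm \<Rightarrow> 'm \<Rightarrow> real" where
  "xi_L mR m m' = (if m = mR \<and> m' = mR then 0 else 1)"

definition xi_R :: "'m \<Rightarrow> 'm \<Rightarrow> 'm \<Rightarrow> real" where
  "xi_R mL m m' = (if m = mL \<and> m' = mL then 1 else 0)"

definition sigma_L :: "'m \<Rightarrow> 'm \<Rightarrow> 'm strat" where
  "sigma_L mL mR = (mu_star mL mR, xi_L mR)"

definition sigma_R :: "'m \<Rightarrow> 'm \<Rightarrow> 'm strat" where
  "sigma_R mL mR = (mu_star mL mR, xi_R mL)"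

end

theory Submission
  imports Defs
begin

(*
  Against a coordinated strategy, a type u that sends m earns 1 - u when the opponent's message
  leads both players to L and u otherwise, so its payoff is u + (1 - 2u) a(m), where a(m) is the
  probability that the opponent's message coordinates with m on L.  Deviating to a message of
  the support shows that in equilibrium almost every low type (u < 1/2) sends messages maximising
  a and almost every high type messages minimising it.  The equilibrium payoff is therefore the
  integral of u + (1 - 2u) A over low types plus u + (1 - 2u) B over high types, with A \<le> 1 and
  0 \<le> B; by symmetry of coordination also q A \<le> q\<^sup>2 + (1 - q) B, where q is the probability
  of a low type.  This payoff is affine in (A, B), increasing in A and decreasing in B, so on this
  region it is maximal at (1, q) or (q, 0), the payoffs of sigma_L and sigma_R.
*)

lemma sum_delta_mult:
  "(\<Sum>m\<in>UNIV. \<Sum>m'\<in>UNIV. (if m = k then 1 else 0) * X m m') = (\<Sum>m'\<in>UNIV. X (k::'m::finite) m' :: real)"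
proof -
  have "(\<Sum>m\<in>UNIV. \<Sum>m'\<in>UNIV. (if m = k then 1 else 0) * X m m')
      = (\<Sum>m\<in>UNIV. if m = k then (\<Sum>m'\<in>UNIV. X m m') else 0)"
    by (rule sum.cong) auto
  then show ?thesis by simp
qed

lemma sum_symmetric_kernel_le:
  fixes x y :: "'a \<Rightarrow> real" and K :: "'a \<Rightarrow> 'a \<Rightarrow> real"
  assumes "finite I" and x: "\<And>i. i \<in> I \<Longrightarrow> 0 \<le> x i" and y: "\<And>i. i \<in> I \<Longrightarrow> 0 \<le> y i"
    and K: "\<And>i j. i \<in> I \<Longrightarrow> j \<in> I \<Longrightarrow> 0 \<le> K i j \<and> K i j \<le> 1"
    and K_sym: "\<And>i j. K i j = K j i"
  shows "(\<Sum>i\<in>I. x i * (\<Sum>j\<in>I. (x j + y j) * K i j))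
       \<le> (\<Sum>i\<in>I. x i)\<^sup>2 + (\<Sum>i\<in>I. y i * (\<Sum>j\<in>I. (x j + y j) * K i j))"
proof -
  have split: "z i * (\<Sum>j\<in>I. (x j + y j) * K i j)
      = (\<Sum>j\<in>I. z i * x j * K i j) + (\<Sum>j\<in>I. z i * y j * K i j)" for z :: "'a \<Rightarrow> real" and i
    by (simp add: sum_distrib_left sum.distrib algebra_simps)
  have "(\<Sum>i\<in>I. \<Sum>j\<in>I. x i * x j * K i j) \<le> (\<Sum>i\<in>I. \<Sum>j\<in>I. x i * x j)"
    using x K by (intro sum_mono) (simp add: mult_left_le)
  also have "\<dots> = (\<Sum>i\<in>I. x i)\<^sup>2"
    by (simp add: power2_eq_square sum_product)
  finally have xx: "(\<Sum>i\<in>I. \<Sum>j\<in>I. x i * x j * K i j) \<le> (\<Sum>i\<in>I. x i)\<^sup>2" .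
  have yy: "0 \<le> (\<Sum>i\<in>I. \<Sum>j\<in>I. y i * y j * K i j)"
    using y K by (intro sum_nonneg) simp
  have xy: "(\<Sum>i\<in>I. \<Sum>j\<in>I. x i * y j * K i j) = (\<Sum>i\<in>I. \<Sum>j\<in>I. y i * x j * K i j)"
    by (subst sum.swap) (simp add: K_sym mult.commute)
  show ?thesis
    using xx yy xy by (simp add: split sum.distrib)
qed

lemma affine_le_max_at_vertices:
  fixes A B a b q :: real
  assumes "0 \<le> a" "b \<le> 0" "0 \<le> q" "A \<le> 1" "0 \<le> B" "q * A \<le> q * q + (1 - q) * B"
  shows "A * a + B * b \<le> max (a + q * b) (q * a)"
proof (cases "A \<le> q")
  case True
  then have "A * a \<le> q * a" "B * b \<le> 0"
    using assms by (simp_all add: mult_right_mono mult_nonneg_nonpos)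
  then show ?thesis by simp
next
  case False
  then have q1: "q < 1" using assms by simp
  define t where "t = (A - q) / (1 - q)"
  have t: "0 \<le> t" "t \<le> 1" "A = q + t * (1 - q)"
    unfolding t_def using False q1 assms(4) by (auto simp: field_simps)
  have "q * (A - q) \<le> (1 - q) * B" using assms(6) by (simp add: algebra_simps)
  then have "q * t \<le> B" unfolding t_def using q1 by (simp add: field_simps mult.commute)
  then have "B * b \<le> q * t * b" using assms(2) by (simp add: mult_right_mono_neg)
  moreover have "A * a = q * a + t * a - q * t * a" unfolding t(3) by (simp add: algebra_simps)
  moreover have "(1 - t) * (q * a) + t * (a + q * b) = q * a + t * a - q * t * a + q * t * b"
    by (simp add: algebra_simps)
  ultimately have "A * a + B * b \<le> (1 - t) * (q * a) + t * (a + q * b)" by linarith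
  also have "\<dots> \<le> (1 - t) * max (a + q * b) (q * a) + t * max (a + q * b) (q * a)"
    using t(1,2) by (intro add_mono mult_left_mono) auto
  finally show ?thesis by (simp add: algebra_simps)
qed

lemma strat_measurable[measurable]:
  "\<sigma> \<in> Sigma_set \<Longrightarrow> (\<lambda>u. fst \<sigma> u m) \<in> borel_measurable lborel"
  by (cases \<sigma>) (auto simp: Sigma_set_def)

lemma strat_nonneg: "\<sigma> \<in> Sigma_set \<Longrightarrow> u \<in> {0..1} \<Longrightarrow> 0 \<le> fst \<sigma> u m"
  by (cases \<sigma>) (auto simp: Sigma_set_def)

lemma strat_sum_eq_1: "\<sigma> \<in> Sigma_set \<Longrightarrow> u \<in> {0..1} \<Longrightarrow> (\<Sum>m\<in>UNIV. fst \<sigma> u m) = 1"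
  by (cases \<sigma>) (auto simp: Sigma_set_def)

lemma strat_le_1:
  assumes "(\<sigma>::'m::finite strat) \<in> Sigma_set" "u \<in> {0..1}"
  shows "fst \<sigma> u m \<le> 1"
proof -
  have "fst \<sigma> u m \<le> (\<Sum>m\<in>UNIV. fst \<sigma> u m)"
    by (rule member_le_sum) (auto intro: strat_nonneg[OF assms])
  then show ?thesis using strat_sum_eq_1[OF assms] by simp
qed

lemma strat_abs_le_1: "(\<sigma>::'m::finite strat) \<in> Sigma_set \<Longrightarrow> u \<in> {0..1} \<Longrightarrow> \<bar>fst \<sigma> u m\<bar> \<le> 1"
  using strat_le_1 strat_nonneg by fastforce

lemma strat_convex_comb_le:
  assumes "(\<sigma>::'m::finite strat) \<in> Sigma_set" "u \<in> {0..1}"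
    and "\<And>m. fst \<sigma> u m \<noteq> 0 \<Longrightarrow> c m \<le> C"
  shows "(\<Sum>m\<in>UNIV. fst \<sigma> u m * c m) \<le> C"
proof -
  have "(\<Sum>m\<in>UNIV. fst \<sigma> u m * c m) \<le> (\<Sum>m\<in>UNIV. fst \<sigma> u m * C)"
  proof (rule sum_mono)
    show "fst \<sigma> u m * c m \<le> fst \<sigma> u m * C" for m
      using assms(3)[of m] strat_nonneg[OF assms(1,2), of m]
      by (cases "fst \<sigma> u m = 0") (auto intro: mult_left_mono)
  qed
  then show ?thesis by (simp add: strat_sum_eq_1[OF assms(1,2)] flip: sum_distrib_right)
qed

lemma strat_convex_comb_ge:
  assumes "(\<sigma>::'m::finite strat) \<in> Sigma_set" "u \<in> {0..1}"
    and "\<And>m. fst \<sigma> u m \<noteq> 0 \<Longrightarrow> C \<le> c m"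
  shows "C \<le> (\<Sum>m\<in>UNIV. fst \<sigma> u m * c m)"
  using strat_convex_comb_le[OF assms(1,2), of "\<lambda>m. - c m" "- C"] assms(3)
  by (simp add: sum_negf)

definition senders :: "'m strat \<Rightarrow> 'm \<Rightarrow> real set" where
  "senders \<sigma> m = {u\<in>{0..1}. fst \<sigma> u m > 0}"

lemma is_L_iff_Sup_senders: "is_L \<sigma> m m' \<longleftrightarrow> Sup (senders \<sigma> m) \<le> snd \<sigma> m m'"
  unfolding is_L_def senders_def ..

lemma is_R_iff_Inf_senders: "is_R \<sigma> m m' \<longleftrightarrow> snd \<sigma> m m' \<le> Inf (senders \<sigma> m)"
  unfolding is_R_def senders_def ..

lemma senders_bdd: "bdd_above (senders \<sigma> m)" "bdd_below (senders \<sigma> m)"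
  unfolding senders_def by (auto intro: bdd_above_Icc[THEN bdd_above_mono] bdd_below_Icc[THEN bdd_below_mono])

lemma in_senders: "\<sigma> \<in> Sigma_set \<Longrightarrow> u \<in> {0..1} \<Longrightarrow> fst \<sigma> u m \<noteq> 0 \<Longrightarrow> u \<in> senders \<sigma> m"
  unfolding senders_def using strat_nonneg[of \<sigma> u m] by auto

lemma is_L_le_cutoff: "is_L \<sigma> m m' \<Longrightarrow> u \<in> senders \<sigma> m \<Longrightarrow> u \<le> snd \<sigma> m m'"
  unfolding is_L_iff_Sup_senders by (meson cSup_upper senders_bdd(1) order_trans)

lemma is_R_cutoff_le: "is_R \<sigma> m m' \<Longrightarrow> u \<in> senders \<sigma> m \<Longrightarrow> snd \<sigma> m m' \<le> u"
  unfolding is_R_iff_Inf_senders by (meson cInf_lower senders_bdd(2) order_trans)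

definition coordinate_L :: "'m strat \<Rightarrow> 'm \<Rightarrow> 'm \<Rightarrow> bool" where
  "coordinate_L \<sigma> m m' \<longleftrightarrow> is_L \<sigma> m m' \<and> is_L \<sigma> m' m"

lemma coordinate_L_sym: "coordinate_L \<sigma> m m' \<longleftrightarrow> coordinate_L \<sigma> m' m"
  unfolding coordinate_L_def by auto

text \<open>Send k, then play as \<open>\<sigma>\<close> prescribes after k: the cutoffs 1 and 0 mean L and R
  for every type in \<open>{0<..1}\<close>.\<close>

definition deviation :: "'m strat \<Rightarrow> 'm \<Rightarrow> 'm strat" where
  "deviation \<sigma> k = (\<lambda>u m. if m = k then 1 else 0, \<lambda>m m'. if coordinate_L \<sigma> k m' then 1 else 0)"

lemma deviation_in_Sigma: "deviation \<sigma> (k::'m::finite) \<in> Sigma_set"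
  unfolding deviation_def Sigma_set_def by auto

lemma sum_mu_star:
  "(\<Sum>m\<in>UNIV. mu_star mL mR u m * c m) = (if u \<le> 1/2 then c mL else c (mR::'m::finite))"
proof -
  have "mu_star mL mR u m * c m = (if m = (if u \<le> 1/2 then mL else mR) then c m else 0)" for m
    by (simp add: mu_star_def)
  then show ?thesis by simp
qed

lemma mu_star_in_Sigma:
  "(\<forall>m m'. \<xi> m m' \<in> {0..1}) \<Longrightarrow> (mu_star mL mR, \<xi>) \<in> (Sigma_set :: 'm::finite strat set)"
  using sum_mu_star[of mL mR _ "\<lambda>_. 1"] unfolding Sigma_set_def by (auto simp: mu_star_def)

lemma senders_mu_star:
  assumes "mL \<noteq> mR"
  shows "senders (mu_star mL mR, \<xi>) mL = {0..1/2}" "senders (mu_star mL mR, \<xi>) mR = {1/2<..1}"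
  using assms unfolding senders_def mu_star_def by auto

lemma is_L_mu_star_iff:
  assumes "mL \<noteq> mR"
  shows "is_L (mu_star mL mR, \<xi>) mL m' \<longleftrightarrow> 1/2 \<le> \<xi> mL m'"
    "is_L (mu_star mL mR, \<xi>) mR m' \<longleftrightarrow> 1 \<le> \<xi> mR m'"
  by (simp_all add: is_L_iff_Sup_senders senders_mu_star[OF assms])

lemma is_R_mu_star_iff:
  assumes "mL \<noteq> mR"
  shows "is_R (mu_star mL mR, \<xi>) mL m' \<longleftrightarrow> \<xi> mL m' \<le> 0"
    "is_R (mu_star mL mR, \<xi>) mR m' \<longleftrightarrow> \<xi> mR m' \<le> 1/2"
  by (simp_all add: is_R_iff_Inf_senders senders_mu_star[OF assms])

section \<open>Message probabilities\<close>

lemma indicator_measurable: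
  "S \<in> sets borel \<Longrightarrow> (indicator S :: real \<Rightarrow> real) \<in> borel_measurable lborel"
  by (simp add: borel_measurable_indicator)

locale type_density =
  fixes f :: "real \<Rightarrow> real"
  assumes f_measurable[measurable]: "f \<in> borel_measurable lborel"
    and f_pos: "\<forall>u\<in>{0..1}. f u > 0"
    and f_integrable: "set_integrable lborel {0..1} f"
    and f_integral: "(LINT u:{0..1}|lborel. f u) = 1"
begin

text \<open>The density extended by zero, so that set integrals over \<open>{0..1}\<close> become integrals
  over \<open>lborel\<close>.\<close>

definition dens :: "real \<Rightarrow> real" where
  "dens u = indicator {0..1} u * f u"

lemma dens_measurable[measurable]: "dens \<in> borel_measurable lborel"
  unfolding dens_def by measurable

lemma dens_nonneg: "0 \<le> dens u"
  using f_pos by (auto simp: dens_def indicator_def less_imp_le)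

lemma dens_outside: "u \<notin> {0..1} \<Longrightarrow> dens u = 0"
  unfolding dens_def by simp

lemma set_integral_eq_integral_dens:
  "(LINT v:{0..1}|lborel. g v * f v) = (\<integral>v. g v * dens v \<partial>lborel)"
  unfolding set_lebesgue_integral_def dens_def by (simp add: mult_ac)

lemma integral_dens: "(\<integral>u. dens u \<partial>lborel) = 1"
  using f_integral unfolding set_lebesgue_integral_def dens_def by (simp add: mult_ac)

lemma integrable_bounded_mult_dens:
  assumes "g \<in> borel_measurable lborel" "\<And>x. x \<in> {0..1} \<Longrightarrow> \<bar>g x\<bar> \<le> C"
  shows "integrable lborel (\<lambda>x. g x * dens x)"
proof (rule Bochner_Integration.integrable_bound)
  show "integrable lborel (\<lambda>x. C * dens x)"
    using f_integrable unfolding set_integrable_def dens_def by simp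
  show "(\<lambda>x. g x * dens x) \<in> borel_measurable lborel" using assms(1) by measurable
  show "AE x in lborel. norm (g x * dens x) \<le> norm (C * dens x)"
  proof (rule AE_I2)
    fix x
    have "\<bar>g x\<bar> * dens x \<le> C * dens x"
      using assms(2) dens_nonneg dens_outside[of x] by (cases "x \<in> {0..1}") (auto intro: mult_right_mono)
    then show "norm (g x * dens x) \<le> norm (C * dens x)"
      using dens_nonneg[of x] by (simp add: abs_mult) (meson abs_ge_self mult_right_mono order_trans)
  qed
qed

definition type_mass :: "real set \<Rightarrow> real" where
  "type_mass S = (\<integral>u. indicator S u * dens u \<partial>lborel)"

definition msg_mass :: "'m::finite strat \<Rightarrow> real set \<Rightarrow> 'm \<Rightarrow> real" where
  "msg_mass \<sigma> S m = (\<integral>u. fst \<sigma> u m * indicator S u * dens u \<partial>lborel)"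

abbreviation msg_prob :: "'m::finite strat \<Rightarrow> 'm \<Rightarrow> real" where
  "msg_prob \<sigma> m \<equiv> msg_mass \<sigma> UNIV m"

lemma integrable_msg_mass:
  assumes "\<sigma> \<in> Sigma_set" "S \<in> sets borel"
  shows "integrable lborel (\<lambda>u. fst \<sigma> u m * indicator S u * dens u)"
proof (rule integrable_bounded_mult_dens)
  show "(\<lambda>u. fst \<sigma> u m * indicator S u) \<in> borel_measurable lborel"
    using assms indicator_measurable[OF assms(2)] by measurable
  show "\<bar>fst \<sigma> u m * indicator S u\<bar> \<le> 1" if "u \<in> {0..1}" for u
    using strat_abs_le_1[OF assms(1) that, of m] by (auto simp: indicator_def)
qed

lemma msg_mass_integrand_nonneg: "\<sigma> \<in> Sigma_set \<Longrightarrow> 0 \<le> fst \<sigma> u m * indicator S u * dens u"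
  using strat_nonneg[of \<sigma> u m] dens_outside[of u]
  by (cases "u \<in> {0..1}") (auto intro!: mult_nonneg_nonneg dens_nonneg)

lemma msg_mass_nonneg: "\<sigma> \<in> Sigma_set \<Longrightarrow> 0 \<le> msg_mass \<sigma> S m"
  unfolding msg_mass_def by (intro Bochner_Integration.integral_nonneg msg_mass_integrand_nonneg)

lemma msg_mass_Un:
  assumes "\<sigma> \<in> Sigma_set" "S \<in> sets borel" "T \<in> sets borel" "S \<inter> T = {}"
  shows "msg_mass \<sigma> (S \<union> T) m = msg_mass \<sigma> S m + msg_mass \<sigma> T m"
proof -
  have ind: "indicator (S \<union> T) u = indicator S u + (indicator T u :: real)" for u
    by (rule indicator_disj_union[OF assms(4)])
  have "msg_mass \<sigma> (S \<union> T) m = (\<integral>u. fst \<sigma> u m * indicator S u * dens u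
          + fst \<sigma> u m * indicator T u * dens u \<partial>lborel)"
    unfolding msg_mass_def ind by (simp add: algebra_simps)
  also have "\<dots> = msg_mass \<sigma> S m + msg_mass \<sigma> T m"
    unfolding msg_mass_def using integrable_msg_mass[OF assms(1)] assms(2,3) by simp
  finally show ?thesis .
qed

lemma msg_mass_split:
  assumes "\<sigma> \<in> Sigma_set"
  shows "msg_mass \<sigma> {..c} m + msg_mass \<sigma> {c<..} m = msg_prob \<sigma> m"
proof -
  have "{..c} \<union> {c<..} = UNIV" "{..c} \<inter> {c<..} = {}" by auto
  then show ?thesis using msg_mass_Un[OF assms, of "{..c}" "{c<..}" m] by simp
qed

lemma sum_msg_mass_weighted:
  assumes "(\<sigma>::'m::finite strat) \<in> Sigma_set" "S \<in> sets borel"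
  shows "(\<Sum>m\<in>UNIV. msg_mass \<sigma> S m * c m)
       = (\<integral>u. (\<Sum>m\<in>UNIV. fst \<sigma> u m * c m) * indicator S u * dens u \<partial>lborel)"
proof -
  have "(\<Sum>m\<in>UNIV. msg_mass \<sigma> S m * c m)
      = (\<Sum>m\<in>UNIV. \<integral>u. c m * (fst \<sigma> u m * indicator S u * dens u) \<partial>lborel)"
    unfolding msg_mass_def by (simp add: mult_ac)
  also have "\<dots> = (\<integral>u. (\<Sum>m\<in>UNIV. c m * (fst \<sigma> u m * indicator S u * dens u)) \<partial>lborel)"
    using integrable_msg_mass[OF assms] by (simp add: Bochner_Integration.integral_sum)
  also have "\<dots> = (\<integral>u. (\<Sum>m\<in>UNIV. fst \<sigma> u m * c m) * indicator S u * dens u \<partial>lborel)"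
    by (simp add: sum_distrib_left sum_distrib_right mult_ac)
  finally show ?thesis .
qed

lemma sum_msg_mass:
  assumes "(\<sigma>::'m::finite strat) \<in> Sigma_set" "S \<in> sets borel"
  shows "(\<Sum>m\<in>UNIV. msg_mass \<sigma> S m) = type_mass S"
proof -
  have "(\<Sum>m\<in>UNIV. msg_mass \<sigma> S m * 1) = type_mass S"
    unfolding sum_msg_mass_weighted[OF assms] type_mass_def
  proof (rule Bochner_Integration.integral_cong[OF refl])
    show "(\<Sum>m\<in>UNIV. fst \<sigma> u m * 1) * indicator S u * dens u = indicator S u * dens u" for u
      by (cases "u \<in> {0..1}") (auto simp: strat_sum_eq_1[OF assms(1)] dens_outside)
  qed
  then show ?thesis by simp
qed

lemma type_mass_UNIV: "type_mass UNIV = 1"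
  unfolding type_mass_def using integral_dens by simp

lemma type_mass_split: "type_mass {..c} + type_mass {c<..} = 1"
proof -
  have "type_mass {..c} + type_mass {c<..} = (\<integral>u. indicator {..c} u * dens u + indicator {c<..} u * dens u \<partial>lborel)"
    unfolding type_mass_def
    by (rule Bochner_Integration.integral_add[symmetric];
        rule integrable_bounded_mult_dens[where C = 1]) (auto simp: indicator_def)
  also have "\<dots> = (\<integral>u. dens u \<partial>lborel)"
    by (rule Bochner_Integration.integral_cong) (auto simp: indicator_def)
  also have "\<dots> = 1" by (rule integral_dens)
  finally show ?thesis .
qed

lemma type_mass_nonneg: "0 \<le> type_mass S"
  unfolding type_mass_def by (intro Bochner_Integration.integral_nonneg mult_nonneg_nonneg dens_nonneg) simp

definition p_low :: real where
  "p_low = type_mass {..1/2}"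

lemma p_low_nonneg: "0 \<le> p_low"
  unfolding p_low_def by (rule type_mass_nonneg)

lemma sum_msg_prob: "(\<sigma>::'m::finite strat) \<in> Sigma_set \<Longrightarrow> (\<Sum>m\<in>UNIV. msg_prob \<sigma> m) = 1"
  using sum_msg_mass[of \<sigma> UNIV] type_mass_UNIV by simp

lemma mu_bar_eq_msg_prob: "mu_bar f (fst \<sigma>) m = msg_prob \<sigma> m"
  unfolding mu_bar_def set_integral_eq_integral_dens msg_mass_def by simp

lemma msg_mass_eq_msg_prob:
  assumes "\<sigma> \<in> Sigma_set" "\<And>u. u \<in> senders \<sigma> m \<Longrightarrow> u \<in> S"
  shows "msg_mass \<sigma> S m = msg_prob \<sigma> m"
  unfolding msg_mass_def
proof (rule Bochner_Integration.integral_cong[OF refl])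
  fix u
  show "fst \<sigma> u m * indicator S u * dens u = fst \<sigma> u m * indicator UNIV u * dens u"
  proof (cases "u \<in> {0..1} \<and> fst \<sigma> u m \<noteq> 0")
    case True
    then show ?thesis using assms(2)[OF in_senders[OF assms(1)]] by simp
  qed (auto simp: dens_outside)
qed

lemma msg_mass_eq_0:
  assumes "\<sigma> \<in> Sigma_set" "AE u in lborel. u \<in> senders \<sigma> m \<longrightarrow> u \<notin> S"
  shows "msg_mass \<sigma> S m = 0"
  unfolding msg_mass_def
proof (rule integral_eq_zero_AE)
  show "AE u in lborel. fst \<sigma> u m * indicator S u * dens u = 0"
    using assms(2)
  proof eventually_elim
    case (elim u)
    then show ?case
      using in_senders[OF assms(1), of u m] dens_outside[of u] by (cases "u \<in> {0..1}") auto
  qed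
qed

lemma msg_mass_of_is_L:
  assumes "\<sigma> \<in> Sigma_set" "is_L \<sigma> m m'"
  shows "msg_mass \<sigma> {..snd \<sigma> m m'} m = msg_prob \<sigma> m" "msg_mass \<sigma> {snd \<sigma> m m'<..} m = 0"
proof -
  show "msg_mass \<sigma> {..snd \<sigma> m m'} m = msg_prob \<sigma> m"
    by (rule msg_mass_eq_msg_prob[OF assms(1)]) (simp add: is_L_le_cutoff[OF assms(2)])
  then show "msg_mass \<sigma> {snd \<sigma> m m'<..} m = 0"
    using msg_mass_split[OF assms(1), of "snd \<sigma> m m'" m] by simp
qed

lemma msg_mass_of_is_R:
  assumes "\<sigma> \<in> Sigma_set" "is_R \<sigma> m m'"
  shows "msg_mass \<sigma> {..snd \<sigma> m m'} m = 0" "msg_mass \<sigma> {snd \<sigma> m m'<..} m = msg_prob \<sigma> m"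
proof -
  have "AE u in lborel. u \<noteq> snd \<sigma> m m'" by (rule AE_lborel_singleton)
  then have "AE u in lborel. u \<in> senders \<sigma> m \<longrightarrow> u \<notin> {..snd \<sigma> m m'}"
    by eventually_elim (auto dest: is_R_cutoff_le[OF assms(2)])
  then show "msg_mass \<sigma> {..snd \<sigma> m m'} m = 0"
    by (rule msg_mass_eq_0[OF assms(1)])
  then show "msg_mass \<sigma> {snd \<sigma> m m'<..} m = msg_prob \<sigma> m"
    using msg_mass_split[OF assms(1), of "snd \<sigma> m m'" m] by simp
qed

lemma msg_mass_of_msg_prob_0:
  assumes "\<sigma> \<in> Sigma_set" "msg_prob \<sigma> m = 0"
  shows "msg_mass \<sigma> {..c} m = 0" "msg_mass \<sigma> {c<..} m = 0"
  using msg_mass_split[OF assms(1), of c m] msg_mass_nonneg[OF assms(1), of "{..c}" m]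
    msg_mass_nonneg[OF assms(1), of "{c<..}" m] assms(2) by linarith+

section \<open>Payoffs against a coordinated strategy\<close>

lemma pi_u_eq_sum_msg_mass:
  fixes \<sigma> \<sigma>' :: "'m::finite strat"
  assumes "\<sigma> \<in> Sigma_set"
  shows "pi_u f \<sigma>' \<sigma> u = (\<Sum>m\<in>UNIV. \<Sum>m'\<in>UNIV. fst \<sigma>' u m *
     ((1 - u) * (if u \<le> snd \<sigma>' m m' then 1 else 0) * msg_mass \<sigma> {..snd \<sigma> m' m} m'
      + u * (if u > snd \<sigma>' m m' then 1 else 0) * msg_mass \<sigma> {snd \<sigma> m' m<..} m'))"
proof -
  define a where "a m m' = fst \<sigma>' u m * (1 - u) * (if u \<le> snd \<sigma>' m m' then 1 else 0)" for m m'
  define b where "b m m' = fst \<sigma>' u m * u * (if u > snd \<sigma>' m m' then 1 else 0)" for m m'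
  have "pi_u f \<sigma>' \<sigma> u = (\<integral>v. (\<Sum>m\<in>UNIV. \<Sum>m'\<in>UNIV.
          a m m' * (fst \<sigma> v m' * indicator {..snd \<sigma> m' m} v * dens v)
        + b m m' * (fst \<sigma> v m' * indicator {snd \<sigma> m' m<..} v * dens v)) \<partial>lborel)"
    unfolding pi_u_def set_integral_eq_integral_dens unfolding pi_uv_def a_def b_def sum_distrib_right
    by (intro Bochner_Integration.integral_cong refl sum.cong) (simp add: indicator_def algebra_simps)
  also have "\<dots> = (\<Sum>m\<in>UNIV. \<Sum>m'\<in>UNIV.
          a m m' * msg_mass \<sigma> {..snd \<sigma> m' m} m' + b m m' * msg_mass \<sigma> {snd \<sigma> m' m<..} m')"
    unfolding msg_mass_def using integrable_msg_mass[OF assms]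
    by (simp add: Bochner_Integration.integral_sum Bochner_Integration.integrable_sum)
  finally show ?thesis
    unfolding a_def b_def by (simp add: algebra_simps)
qed

lemma pi_u_measurable[measurable]:
  assumes "(\<sigma>::'m::finite strat) \<in> Sigma_set" "\<sigma>' \<in> Sigma_set"
  shows "(\<lambda>u. pi_u f \<sigma>' \<sigma> u) \<in> borel_measurable lborel"
  unfolding pi_u_eq_sum_msg_mass[OF assms(1)] using assms(2) by measurable

definition coord_prob :: "'m::finite strat \<Rightarrow> 'm \<Rightarrow> real" where
  "coord_prob \<sigma> m = (\<Sum>m'\<in>UNIV. msg_prob \<sigma> m' * (if coordinate_L \<sigma> m m' then 1 else 0))"

definition coord_weight :: "'m::finite strat \<Rightarrow> real \<Rightarrow> real" where
  "coord_weight \<sigma> u = (\<Sum>m\<in>UNIV. fst \<sigma> u m * coord_prob \<sigma> m)"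

lemma coord_prob_bounds:
  assumes "(\<sigma>::'m::finite strat) \<in> Sigma_set"
  shows "0 \<le> coord_prob \<sigma> m" "coord_prob \<sigma> m \<le> 1"
proof -
  show "0 \<le> coord_prob \<sigma> m"
    unfolding coord_prob_def by (intro sum_nonneg) (simp add: msg_mass_nonneg[OF assms])
  have "coord_prob \<sigma> m \<le> (\<Sum>m'\<in>UNIV. msg_prob \<sigma> m')"
    unfolding coord_prob_def by (intro sum_mono) (simp add: msg_mass_nonneg[OF assms])
  then show "coord_prob \<sigma> m \<le> 1" using sum_msg_prob[OF assms] by simp
qed

lemma coordinatedD:
  "coordinated f \<sigma> \<Longrightarrow> msg_prob \<sigma> m > 0 \<Longrightarrow> msg_prob \<sigma> m' > 0 \<Longrightarrow>
     coordinate_L \<sigma> m m' \<or> (is_R \<sigma> m m' \<and> is_R \<sigma> m' m)"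
  unfolding coordinated_def coordinate_L_def mu_bar_eq_msg_prob by blast

lemma reply_payoff:
  assumes \<sigma>: "\<sigma> \<in> Sigma_set" and co: "coordinated f \<sigma>" and m: "msg_prob \<sigma> m > 0"
    and L: "coordinate_L \<sigma> m m' \<Longrightarrow> u \<le> c" and R: "\<not> coordinate_L \<sigma> m m' \<Longrightarrow> is_R \<sigma> m m' \<Longrightarrow> c < u"
  shows "(1 - u) * (if u \<le> c then 1 else 0) * msg_mass \<sigma> {..snd \<sigma> m' m} m'
       + u * (if u > c then 1 else 0) * msg_mass \<sigma> {snd \<sigma> m' m<..} m'
       = msg_prob \<sigma> m' * (if coordinate_L \<sigma> m m' then 1 - u else u)"
proof (cases "msg_prob \<sigma> m' = 0")
  case True
  then show ?thesis using msg_mass_of_msg_prob_0[OF \<sigma>] by simp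
next
  case False
  then have "msg_prob \<sigma> m' > 0" using msg_mass_nonneg[OF \<sigma>, of UNIV m'] by simp
  then consider "coordinate_L \<sigma> m m'" | "\<not> coordinate_L \<sigma> m m'" "is_R \<sigma> m m'" "is_R \<sigma> m' m"
    using coordinatedD[OF co m] by blast
  then show ?thesis
  proof cases
    case 1
    then have "is_L \<sigma> m' m" unfolding coordinate_L_def by simp
    with 1 show ?thesis using L msg_mass_of_is_L[OF \<sigma>] by simp
  next
    case 2
    then show ?thesis using R msg_mass_of_is_R[OF \<sigma>] by simp
  qed
qed

lemma sum_reply_payoff:
  assumes "(\<sigma>::'m::finite strat) \<in> Sigma_set"
  shows "(\<Sum>m'\<in>UNIV. msg_prob \<sigma> m' * (if coordinate_L \<sigma> m m' then 1 - u else u))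
       = u + (1 - 2 * u) * coord_prob \<sigma> m"
proof -
  have "(\<Sum>m'\<in>UNIV. msg_prob \<sigma> m' * (if coordinate_L \<sigma> m m' then 1 - u else u))
      = (\<Sum>m'\<in>UNIV. u * msg_prob \<sigma> m' + (1 - 2 * u) * (msg_prob \<sigma> m' * (if coordinate_L \<sigma> m m' then 1 else 0)))"
    by (intro sum.cong) (auto simp: algebra_simps)
  also have "\<dots> = u * (\<Sum>m'\<in>UNIV. msg_prob \<sigma> m') + (1 - 2 * u) * coord_prob \<sigma> m"
    unfolding coord_prob_def by (simp add: sum.distrib sum_distrib_left)
  finally show ?thesis using sum_msg_prob[OF assms] by simp
qed

text \<open>Excluding \<open>Inf (senders \<sigma> m)\<close> rules out the tie \<open>u = \<xi>(m, m')\<close> for an R cutoff.\<close>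

definition regular_type :: "'m::finite strat \<Rightarrow> real \<Rightarrow> bool" where
  "regular_type \<sigma> u \<longleftrightarrow> u \<in> {0..1} \<and> (\<forall>m. msg_prob \<sigma> m = 0 \<longrightarrow> fst \<sigma> u m = 0)
     \<and> (\<forall>m. u \<noteq> Inf (senders \<sigma> m))"

lemma regular_type_msg_prob_pos:
  "\<sigma> \<in> Sigma_set \<Longrightarrow> regular_type \<sigma> u \<Longrightarrow> fst \<sigma> u m \<noteq> 0 \<Longrightarrow> msg_prob \<sigma> m > 0"
  using msg_mass_nonneg[of \<sigma> UNIV m] unfolding regular_type_def by force

lemma AE_regular_type:
  assumes \<sigma>: "(\<sigma>::'m::finite strat) \<in> Sigma_set"
  shows "AE u in lborel. u \<in> {0..1} \<longrightarrow> regular_type \<sigma> u"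
proof -
  have unsent: "AE u in lborel. u \<in> {0..1} \<longrightarrow> msg_prob \<sigma> m = 0 \<longrightarrow> fst \<sigma> u m = 0" for m
  proof (cases "msg_prob \<sigma> m = 0")
    case True
    have "AE u in lborel. 0 \<le> fst \<sigma> u m * indicator UNIV u * dens u"
      using msg_mass_integrand_nonneg[OF \<sigma>] by (intro AE_I2) blast
    then have "AE u in lborel. fst \<sigma> u m * indicator UNIV u * dens u = 0"
      using True integral_nonneg_eq_0_iff_AE[OF integrable_msg_mass[OF \<sigma>, of UNIV m]]
      unfolding msg_mass_def by simp
    then show ?thesis
    proof eventually_elim
      case (elim u)
      show ?case
      proof (intro impI)
        assume "u \<in> {0..1}"
        then have "dens u \<noteq> 0" using f_pos by (simp add: dens_def less_imp_neq[symmetric])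
        then show "fst \<sigma> u m = 0" using elim by simp
      qed
    qed
  qed simp
  have "AE u in lborel. \<forall>m\<in>UNIV. u \<in> {0..1} \<longrightarrow> msg_prob \<sigma> m = 0 \<longrightarrow> fst \<sigma> u m = 0"
    by (rule AE_finite_allI) (simp, rule unsent)
  moreover have "AE u in lborel. \<forall>m\<in>UNIV. u \<noteq> Inf (senders \<sigma> m)"
    by (rule AE_finite_allI) (simp_all add: AE_lborel_singleton)
  ultimately show ?thesis
    unfolding regular_type_def by eventually_elim blast
qed

lemma pi_u_self_regular:
  assumes \<sigma>: "(\<sigma>::'m::finite strat) \<in> Sigma_set" and co: "coordinated f \<sigma>" and u: "regular_type \<sigma> u"
  shows "pi_u f \<sigma> \<sigma> u = u + (1 - 2 * u) * coord_weight \<sigma> u"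
proof -
  have u01: "u \<in> {0..1}" using u unfolding regular_type_def by simp
  have "pi_u f \<sigma> \<sigma> u = (\<Sum>m\<in>UNIV. fst \<sigma> u m * (u + (1 - 2 * u) * coord_prob \<sigma> m))"
    unfolding pi_u_eq_sum_msg_mass[OF \<sigma>]
  proof (intro sum.cong refl)
    fix m
    show "(\<Sum>m'\<in>UNIV. fst \<sigma> u m *
            ((1 - u) * (if u \<le> snd \<sigma> m m' then 1 else 0) * msg_mass \<sigma> {..snd \<sigma> m' m} m' +
             u * (if u > snd \<sigma> m m' then 1 else 0) * msg_mass \<sigma> {snd \<sigma> m' m<..} m'))
        = fst \<sigma> u m * (u + (1 - 2 * u) * coord_prob \<sigma> m)"
    proof (cases "fst \<sigma> u m = 0")
      case False
      then have sender: "u \<in> senders \<sigma> m" using in_senders[OF \<sigma> u01] by blast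
      have m: "msg_prob \<sigma> m > 0" using regular_type_msg_prob_pos[OF \<sigma> u False] .
      have "u \<noteq> Inf (senders \<sigma> m)" using u unfolding regular_type_def by blast
      then have "Inf (senders \<sigma> m) < u"
        using cInf_lower[OF sender senders_bdd(2)] by simp
      then have "(1 - u) * (if u \<le> snd \<sigma> m m' then 1 else 0) * msg_mass \<sigma> {..snd \<sigma> m' m} m' +
             u * (if u > snd \<sigma> m m' then 1 else 0) * msg_mass \<sigma> {snd \<sigma> m' m<..} m'
          = msg_prob \<sigma> m' * (if coordinate_L \<sigma> m m' then 1 - u else u)" for m'
        by (intro reply_payoff[OF \<sigma> co m])
           (auto simp: coordinate_L_def is_R_iff_Inf_senders intro: is_L_le_cutoff[OF _ sender])
      then show ?thesis
        by (simp add: sum_reply_payoff[OF \<sigma>] flip: sum_distrib_left)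
    qed simp
  qed
  also have "\<dots> = (\<Sum>m\<in>UNIV. u * fst \<sigma> u m + (1 - 2 * u) * (fst \<sigma> u m * coord_prob \<sigma> m))"
    by (intro sum.cong) (simp_all add: algebra_simps)
  also have "\<dots> = u + (1 - 2 * u) * coord_weight \<sigma> u"
    using strat_sum_eq_1[OF \<sigma> u01]
    by (simp add: coord_weight_def sum.distrib flip: sum_distrib_left)
  finally show ?thesis .
qed

lemma pi_u_deviation:
  assumes \<sigma>: "(\<sigma>::'m::finite strat) \<in> Sigma_set" and co: "coordinated f \<sigma>" and k: "msg_prob \<sigma> k > 0"
    and u: "0 < u" "u \<le> 1"
  shows "pi_u f (deviation \<sigma> k) \<sigma> u = u + (1 - 2 * u) * coord_prob \<sigma> k"
proof -
  have "(1 - u) * (if u \<le> (if coordinate_L \<sigma> k m' then 1 else 0) then 1 else 0) * msg_mass \<sigma> {..snd \<sigma> m' k} m'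
      + u * (if u > (if coordinate_L \<sigma> k m' then 1 else 0) then 1 else 0) * msg_mass \<sigma> {snd \<sigma> m' k<..} m'
      = msg_prob \<sigma> m' * (if coordinate_L \<sigma> k m' then 1 - u else u)" for m'
    by (rule reply_payoff[OF \<sigma> co k]) (use u in auto)
  then show ?thesis
    unfolding pi_u_eq_sum_msg_mass[OF \<sigma>] deviation_def fst_conv snd_conv sum_delta_mult
    by (simp add: sum_reply_payoff[OF \<sigma>])
qed

section \<open>Equilibrium payoffs\<close>

lemma coord_weight_at_best_reply:
  assumes \<sigma>: "(\<sigma>::'m::finite strat) \<in> Sigma_set" and co: "coordinated f \<sigma>"
    and best: "\<forall>\<sigma>'\<in>Sigma_set. pi_u f \<sigma>' \<sigma> u \<le> pi_u f \<sigma> \<sigma> u"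
    and u: "regular_type \<sigma> u" "0 < u" "u \<noteq> 1/2"
    and kmax: "msg_prob \<sigma> kmax > 0" "\<And>k. msg_prob \<sigma> k > 0 \<Longrightarrow> coord_prob \<sigma> k \<le> coord_prob \<sigma> kmax"
    and kmin: "msg_prob \<sigma> kmin > 0" "\<And>k. msg_prob \<sigma> k > 0 \<Longrightarrow> coord_prob \<sigma> kmin \<le> coord_prob \<sigma> k"
  shows "coord_weight \<sigma> u = (if u \<le> 1/2 then coord_prob \<sigma> kmax else coord_prob \<sigma> kmin)"
proof -
  have u01: "u \<in> {0..1}" using u(1) unfolding regular_type_def by simp
  have deviate: "(1 - 2 * u) * coord_prob \<sigma> k \<le> (1 - 2 * u) * coord_weight \<sigma> u"
    if "msg_prob \<sigma> k > 0" for k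
    using best deviation_in_Sigma[of \<sigma> k] pi_u_deviation[OF \<sigma> co that u(2)] u01
      pi_u_self_regular[OF \<sigma> co u(1)] by force
  have "coord_weight \<sigma> u \<le> coord_prob \<sigma> kmax"
    unfolding coord_weight_def
    by (rule strat_convex_comb_le[OF \<sigma> u01]) (intro kmax(2) regular_type_msg_prob_pos[OF \<sigma> u(1)])
  moreover have "coord_prob \<sigma> kmin \<le> coord_weight \<sigma> u"
    unfolding coord_weight_def
    by (rule strat_convex_comb_ge[OF \<sigma> u01]) (intro kmin(2) regular_type_msg_prob_pos[OF \<sigma> u(1)])
  moreover have "u < 1/2 \<Longrightarrow> coord_prob \<sigma> kmax \<le> coord_weight \<sigma> u"
    using deviate[OF kmax(1)] by simp
  moreover have "u > 1/2 \<Longrightarrow> coord_weight \<sigma> u \<le> coord_prob \<sigma> kmin"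
    using deviate[OF kmin(1)] by (simp add: mult_le_cancel_left)
  ultimately show ?thesis using u(3) by auto
qed

lemma coord_weight_of_equilibrium:
  fixes \<sigma> :: "'m::finite strat"
  assumes eq: "equilibrium f \<sigma>" and co: "coordinated f \<sigma>"
  obtains A B where "A \<le> 1" "0 \<le> B"
    "AE u in lborel. u \<in> {0..1} \<longrightarrow> coord_weight \<sigma> u = (if u \<le> 1/2 then A else B)"
proof -
  have \<sigma>: "\<sigma> \<in> Sigma_set" using eq unfolding equilibrium_def by simp
  define S where "S = {m. msg_prob \<sigma> m > 0}"
  have "S \<noteq> {}"
  proof
    assume "S = {}"
    then have not_pos: "\<not> msg_prob \<sigma> m > 0" for m unfolding S_def by blast
    have "msg_prob \<sigma> m = 0" for m
      using msg_mass_nonneg[OF \<sigma>, of UNIV m] not_pos[of m] by linarith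
    then show False using sum_msg_prob[OF \<sigma>] by simp
  qed
  then have "Max (coord_prob \<sigma> ` S) \<in> coord_prob \<sigma> ` S" "Min (coord_prob \<sigma> ` S) \<in> coord_prob \<sigma> ` S"
    by (auto intro!: Max_in Min_in)
  then obtain kmax kmin where "kmax \<in> S" "coord_prob \<sigma> kmax = Max (coord_prob \<sigma> ` S)"
    and "kmin \<in> S" "coord_prob \<sigma> kmin = Min (coord_prob \<sigma> ` S)"
    unfolding image_iff by metis
  then have kmax: "msg_prob \<sigma> kmax > 0" "\<And>k. msg_prob \<sigma> k > 0 \<Longrightarrow> coord_prob \<sigma> k \<le> coord_prob \<sigma> kmax"
    and kmin: "msg_prob \<sigma> kmin > 0" "\<And>k. msg_prob \<sigma> k > 0 \<Longrightarrow> coord_prob \<sigma> kmin \<le> coord_prob \<sigma> k"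
    unfolding S_def by auto
  have "AE u in lborel. u \<in> {0..1} \<longrightarrow>
      coord_weight \<sigma> u = (if u \<le> 1/2 then coord_prob \<sigma> kmax else coord_prob \<sigma> kmin)"
    using AE_regular_type[OF \<sigma>] AE_lborel_singleton[of 0] AE_lborel_singleton[of "1/2"]
  proof eventually_elim
    case (elim u)
    show ?case
      using eq elim coord_weight_at_best_reply[OF \<sigma> co _ _ _ _ kmax kmin, of u]
      unfolding equilibrium_def regular_type_def by auto
  qed
  then show ?thesis
    using that coord_prob_bounds[OF \<sigma>] by blast
qed

definition step_payoff :: "real \<Rightarrow> real \<Rightarrow> real" where
  "step_payoff A B = (\<integral>u. (u + (1 - 2 * u) * (if u \<le> 1/2 then A else B)) * dens u \<partial>lborel)"

lemma pi_tot_self_eq_step_payoff: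
  assumes \<sigma>: "(\<sigma>::'m::finite strat) \<in> Sigma_set" and co: "coordinated f \<sigma>"
    and step: "AE u in lborel. u \<in> {0..1} \<longrightarrow> coord_weight \<sigma> u = (if u \<le> 1/2 then A else B)"
  shows "pi_tot f \<sigma> \<sigma> = step_payoff A B"
  unfolding pi_tot_def set_integral_eq_integral_dens step_payoff_def
proof (rule integral_cong_AE)
  show "(\<lambda>u. pi_u f \<sigma> \<sigma> u * dens u) \<in> borel_measurable lborel"
    using \<sigma> by measurable
  show "(\<lambda>u. (u + (1 - 2 * u) * (if u \<le> 1/2 then A else B)) * dens u) \<in> borel_measurable lborel"
    by measurable
  show "AE u in lborel. pi_u f \<sigma> \<sigma> u * dens u = (u + (1 - 2 * u) * (if u \<le> 1/2 then A else B)) * dens u"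
    using step AE_regular_type[OF \<sigma>]
    by eventually_elim (auto simp: dens_outside pi_u_self_regular[OF \<sigma> co])
qed

lemma sum_msg_mass_coord_prob:
  assumes \<sigma>: "(\<sigma>::'m::finite strat) \<in> Sigma_set" and S: "S \<in> sets borel"
    and C: "AE u in lborel. u \<in> S \<inter> {0..1} \<longrightarrow> coord_weight \<sigma> u = C"
  shows "(\<Sum>m\<in>UNIV. msg_mass \<sigma> S m * coord_prob \<sigma> m) = C * type_mass S"
proof -
  have "(\<Sum>m\<in>UNIV. msg_mass \<sigma> S m * coord_prob \<sigma> m) = (\<integral>u. coord_weight \<sigma> u * indicator S u * dens u \<partial>lborel)"
    unfolding sum_msg_mass_weighted[OF \<sigma> S] coord_weight_def ..
  also have "\<dots> = (\<integral>u. C * (indicator S u * dens u) \<partial>lborel)"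
  proof (rule integral_cong_AE)
    show "(\<lambda>u. coord_weight \<sigma> u * indicator S u * dens u) \<in> borel_measurable lborel"
      unfolding coord_weight_def using \<sigma> indicator_measurable[OF S] by measurable
    show "(\<lambda>u. C * (indicator S u * dens u)) \<in> borel_measurable lborel"
      using indicator_measurable[OF S] by measurable
    show "AE u in lborel. coord_weight \<sigma> u * indicator S u * dens u = C * (indicator S u * dens u)"
      using C
    proof eventually_elim
      case (elim u)
      then show ?case by (cases "u \<in> {0..1}") (auto simp: dens_outside indicator_def)
    qed
  qed
  finally show ?thesis unfolding type_mass_def by simp
qed

text \<open>Low senders meet high senders as often as high senders meet low ones, because
  coordination on L is symmetric.\<close>

lemma step_constraint:
  assumes \<sigma>: "(\<sigma>::'m::finite strat) \<in> Sigma_set"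
    and step: "AE u in lborel. u \<in> {0..1} \<longrightarrow> coord_weight \<sigma> u = (if u \<le> 1/2 then A else B)"
  shows "p_low * A \<le> p_low * p_low + (1 - p_low) * B"
proof -
  define x where "x = msg_mass \<sigma> {..1/2}"
  define y where "y = msg_mass \<sigma> {1/2<..}"
  define K where "K m m' = (if coordinate_L \<sigma> m m' then 1 else 0 :: real)" for m m'
  have cp: "coord_prob \<sigma> m = (\<Sum>m'\<in>UNIV. (x m' + y m') * K m m')" for m
    unfolding coord_prob_def x_def y_def K_def msg_mass_split[OF \<sigma>] ..
  have "(\<Sum>m\<in>UNIV. x m * coord_prob \<sigma> m) = A * p_low"
    unfolding x_def p_low_def using step
    by (intro sum_msg_mass_coord_prob[OF \<sigma>]) (auto elim!: eventually_mono)
  moreover have "(\<Sum>m\<in>UNIV. y m * coord_prob \<sigma> m) = B * (1 - p_low)"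
    unfolding y_def p_low_def using step type_mass_split[of "1/2"]
    by (subst sum_msg_mass_coord_prob[OF \<sigma>, of _ B]) (auto elim!: eventually_mono)
  moreover have "(\<Sum>m\<in>UNIV. x m * coord_prob \<sigma> m)
      \<le> (\<Sum>m\<in>UNIV. x m)\<^sup>2 + (\<Sum>m\<in>UNIV. y m * coord_prob \<sigma> m)"
    unfolding cp
    by (rule sum_symmetric_kernel_le)
       (auto simp: x_def y_def K_def msg_mass_nonneg[OF \<sigma>] coordinate_L_sym)
  moreover have "(\<Sum>m\<in>UNIV. x m) = p_low"
    unfolding x_def p_low_def by (rule sum_msg_mass[OF \<sigma>]) simp
  ultimately show ?thesis by (simp add: power2_eq_square algebra_simps)
qed

lemma step_payoff_le_max:
  assumes "A \<le> 1" "0 \<le> B" "p_low * A \<le> p_low * p_low + (1 - p_low) * B"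
  shows "step_payoff A B \<le> max (step_payoff 1 p_low) (step_payoff p_low 0)"
proof -
  define c where "c = (\<integral>u. u * dens u \<partial>lborel)"
  define a where "a = (\<integral>u. (1 - 2 * u) * indicator {..1/2} u * dens u \<partial>lborel)"
  define b where "b = (\<integral>u. (1 - 2 * u) * indicator {1/2<..} u * dens u \<partial>lborel)"
  have affine: "step_payoff A' B' = c + A' * a + B' * b" for A' B'
  proof -
    have "step_payoff A' B' = (\<integral>u. u * dens u + A' * ((1 - 2 * u) * indicator {..1/2} u * dens u)
        + B' * ((1 - 2 * u) * indicator {1/2<..} u * dens u) \<partial>lborel)"
      unfolding step_payoff_def by (rule Bochner_Integration.integral_cong) (auto simp: algebra_simps)
    also have "\<dots> = c + A' * a + B' * b"
      unfolding a_def b_def c_def using integrable_bounded_mult_dens[where C = 1]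
      by (simp add: indicator_def)
    finally show ?thesis .
  qed
  have "0 \<le> (1 - 2 * u) * indicator {..1/2} u * dens u" for u
    using dens_nonneg[of u] by (cases "u \<le> 1/2") auto
  then have "0 \<le> a"
    unfolding a_def by (intro Bochner_Integration.integral_nonneg)
  have "0 \<le> - ((1 - 2 * u) * indicator {1/2<..} u * dens u)" for u
    using dens_nonneg[of u] by (cases "u \<le> 1/2") (auto simp: mult_nonpos_nonneg)
  then have "0 \<le> - b"
    unfolding b_def by (subst integral_minus[symmetric]) (intro Bochner_Integration.integral_nonneg)
  have "A * a + B * b \<le> max (a + p_low * b) (p_low * a)"
    using affine_le_max_at_vertices[OF \<open>0 \<le> a\<close> _ p_low_nonneg assms] \<open>0 \<le> - b\<close> by simp
  then show ?thesis unfolding affine by (simp flip: max_add_distrib_left add.assoc)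
qed

lemma msg_prob_mu_star:
  assumes "mL \<noteq> mR"
  shows "msg_prob (mu_star mL mR, \<xi>) m = (if m = mL then p_low else 0) + (if m = mR then 1 - p_low else 0)"
proof -
  have "msg_prob (mu_star mL mR, \<xi>) m
      = (if m = mL then type_mass {..1/2} else 0) + (if m = mR then type_mass {1/2<..} else 0)"
    unfolding msg_mass_def type_mass_def using assms
    by (auto simp: mu_star_def indicator_def of_bool_def intro!: Bochner_Integration.integral_cong)
  then show ?thesis
    using type_mass_split[of "1/2"] unfolding p_low_def by simp
qed

lemma coord_prob_mu_star:
  assumes "mL \<noteq> mR"
  shows "coord_prob (mu_star mL mR, \<xi>) m
    = (if coordinate_L (mu_star mL mR, \<xi>) m mL then p_low else 0)
    + (if coordinate_L (mu_star mL mR, \<xi>) m mR then 1 - p_low else 0)"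
  unfolding coord_prob_def msg_prob_mu_star[OF assms]
  by (simp add: distrib_right sum.distrib if_distrib[of "\<lambda>x. x * _"] cong: if_cong)

lemma pi_tot_mu_star:
  assumes "\<forall>m m'. \<xi> m m' \<in> {0..1}" and co: "coordinated f (mu_star mL mR, \<xi>)"
  shows "pi_tot f (mu_star mL mR, \<xi>) (mu_star mL mR, \<xi>)
       = step_payoff (coord_prob (mu_star mL mR, \<xi>) mL) (coord_prob (mu_star mL mR, \<xi>) (mR::'m::finite))"
  by (rule pi_tot_self_eq_step_payoff[OF mu_star_in_Sigma[OF assms(1)] co])
     (simp add: coord_weight_def sum_mu_star)

lemma coordinated_mu_star:
  assumes "mL \<noteq> mR"
    and "\<And>m m'. m \<in> {mL, mR} \<Longrightarrow> m' \<in> {mL, mR} \<Longrightarrow>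
      (is_L (mu_star mL mR, \<xi>) m m' \<and> is_L (mu_star mL mR, \<xi>) m' m) \<or>
      (is_R (mu_star mL mR, \<xi>) m m' \<and> is_R (mu_star mL mR, \<xi>) m' m)"
  shows "coordinated f (mu_star mL mR, \<xi>)"
  unfolding coordinated_def mu_bar_eq_msg_prob
  using assms(2) by (auto simp: msg_prob_mu_star[OF assms(1)] split: if_splits)

lemma pi_tot_sigma_L:
  assumes "(mL::'m::finite) \<noteq> mR"
  shows "pi_tot f (sigma_L mL mR) (sigma_L mL mR) = step_payoff 1 p_low"
proof -
  have co: "coordinated f (mu_star mL mR, xi_L mR)"
    by (rule coordinated_mu_star[OF assms])
       (use assms in \<open>auto simp: is_L_mu_star_iff[OF assms] is_R_mu_star_iff[OF assms] xi_L_def\<close>)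
  have xi: "\<forall>m m'. xi_L mR m m' \<in> {0..1}" by (simp add: xi_L_def)
  show ?thesis
    unfolding sigma_L_def pi_tot_mu_star[OF xi co] coord_prob_mu_star[OF assms]
    using assms by (simp add: xi_L_def coordinate_L_def is_L_mu_star_iff[OF assms])
qed

lemma pi_tot_sigma_R:
  assumes "(mL::'m::finite) \<noteq> mR"
  shows "pi_tot f (sigma_R mL mR) (sigma_R mL mR) = step_payoff p_low 0"
proof -
  have co: "coordinated f (mu_star mL mR, xi_R mL)"
    by (rule coordinated_mu_star[OF assms])
       (use assms in \<open>auto simp: is_L_mu_star_iff[OF assms] is_R_mu_star_iff[OF assms] xi_R_def\<close>)
  have xi: "\<forall>m m'. xi_R mL m m' \<in> {0..1}" by (simp add: xi_R_def)
  show ?thesis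
    unfolding sigma_R_def pi_tot_mu_star[OF xi co] coord_prob_mu_star[OF assms]
    using assms by (simp add: xi_R_def coordinate_L_def is_L_mu_star_iff[OF assms])
qed

end

text \<open>The bound does not use \<open>card_M\<close>: any two distinct messages suffice.\<close>

theorem mainTheorem6:
  fixes f :: "real \<Rightarrow> real" and \<sigma> :: "'m::finite strat" and mL mR :: 'm
  assumes card_M: "CARD('m) \<ge> 4"
    and f_meas: "f \<in> borel_measurable lborel"
    and f_pos: "\<forall>u\<in>{0..1}. f u > 0"
    and f_int: "set_integrable lborel {0..1} f"
    and f_one: "(LINT u:{0..1}|lborel. f u) = 1"
    and distinct_msgs: "mL \<noteq> mR"
    and eq: "equilibrium f \<sigma>"
    and coord: "coordinated f \<sigma>"
  shows "pi_tot f \<sigma> \<sigma> \<le> max (pi_tot f (sigma_L mL mR) (sigma_L mL mR)) (pi_tot f (sigma_R mL mR) (sigma_R mL mR))"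
proof -
  interpret type_density f
    using f_meas f_pos f_int f_one by unfold_locales
  have \<sigma>: "\<sigma> \<in> Sigma_set"
    using eq unfolding equilibrium_def by simp
  obtain A B where AB: "A \<le> 1" "0 \<le> B"
    and step: "AE u in lborel. u \<in> {0..1} \<longrightarrow> coord_weight \<sigma> u = (if u \<le> 1/2 then A else B)"
    using coord_weight_of_equilibrium[OF eq coord] .
  have "pi_tot f \<sigma> \<sigma> = step_payoff A B"
    by (rule pi_tot_self_eq_step_payoff[OF \<sigma> coord step])
  also have "\<dots> \<le> max (step_payoff 1 p_low) (step_payoff p_low 0)"
    by (rule step_payoff_le_max[OF AB step_constraint[OF \<sigma> step]])
  also have "\<dots> = max (pi_tot f (sigma_L mL mR) (sigma_L mL mR)) (pi_tot f (sigma_R mL mR) (sigma_R mL mR))"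
    by (simp add: pi_tot_sigma_L[OF distinct_msgs] pi_tot_sigma_R[OF distinct_msgs])
  finally show ?thesis .
qed

end
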